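(* Let $p$ be an integer with $1\le p\le13$. For $\eta\in\mathbf P^p([-1,1])$ with $\eta(-1)=0$, write $\eta=\sum_{m=1}^p\eta_m(L_m+L_{m-1})$ and define $$\Delta(\eta):=(2\eta(1)-3\eta_p)^2+p^2\Big(-4\|\eta\|^2_{L^2(-1,1)}+\frac{9\eta_p^2}{2p+1}\Big).$$ Then $\Delta(\eta)<0$ for every such $\eta$ that is not the null function.
   Context: $L_m$ are the Legendre polynomials: $L_0=1$, $L_1=x$, $(m+1)L_{m+1}=(2m+1)xL_m-mL_{m-1}$; $L_m(1)=1$, $L_m(-1)=(-1)^m$, so the polynomials $L_m+L_{m-1}$, $1\le m\le p$, form a basis of $\{\eta\in\mathbf P^p([-1,1]):\eta(-1)=0\}$ and the coefficients $\eta_m$ are uniquely determined. $\mathbf P^p([-1,1])$ is the space of real polynomials of degree at most $p$. *)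

theory Defs
  imports "HOL-Analysis.Analysis" "HOL-Computational_Algebra.Polynomial"
begin

fun legendre :: "nat \<Rightarrow> real poly" where
  "legendre 0 = 1"
| "legendre (Suc 0) = [:0, 1:]"
| "legendre (Suc (Suc m)) =
     smult (1 / real (m + 2))
       (smult (real (2 * m + 3)) (pCons 0 (legendre (Suc m))) - smult (real (m + 1)) (legendre m))"

end

(*
  Expand eta = (SUM k<=p. a_k L_k) with a_k = c_k + c_(k+1), where c_0 = c_(p+1) = 0. By orthogonality,
  ||eta||^2 = (SUM k<=p. 2 a_k^2 / (2k+1)), while eta(1) = (SUM k<=p. a_k) and eta(-1) = 0 expresses
  a_p as V = (SUM k<p. (-1)^(p+k+1) a_k). With Y = (SUM k<p. a_k) and S = (SUM k<p. a_k^2 / (2k+1)),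
  Delta = (2Y - V)^2 - 8 p^2 S + p^2 V^2 / (2p+1). For p >= 2 a weighted Cauchy-Schwarz inequality bounds S
  from below by the inverse Gram form (p Y^2 - 2 Y V + p V^2) / (p (p^2 - 1)) of the two linear
  constraints, and the resulting quadratic form in (Y, V) is negative definite exactly when
  p^2 < 13 p + 8, i.e. for p <= 13.
*)

theory Submission
  imports Defs
begin

section \<open>Integrals of polynomials over [-1, 1]\<close>

definition poly_integral :: "real poly \<Rightarrow> real" where
  "poly_integral q = integral {-1..1} (poly q)"

lemma poly_integrable_on: "poly q integrable_on {a..b::real}"
  by (intro integrable_continuous_interval continuous_intros)

lemma poly_integral_add: "poly_integral (p + q) = poly_integral p + poly_integral q"
proof -
  have "poly (p + q) = (\<lambda>x. poly p x + poly q x)" by auto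
  then show ?thesis
    unfolding poly_integral_def by (simp add: integral_add poly_integrable_on)
qed

lemma poly_integral_diff: "poly_integral (p - q) = poly_integral p - poly_integral q"
proof -
  have "poly (p - q) = (\<lambda>x. poly p x - poly q x)" by auto
  then show ?thesis
    unfolding poly_integral_def by (simp add: integral_diff poly_integrable_on)
qed

lemma poly_integral_smult: "poly_integral (smult a q) = a * poly_integral q"
proof -
  have "poly (smult a q) = (\<lambda>x. a * poly q x)" by auto
  then show ?thesis
    unfolding poly_integral_def by simp
qed

lemma poly_integral_0: "poly_integral 0 = 0"
  using poly_integral_smult [of 0 0] by simp

lemma poly_integral_sum: "poly_integral (\<Sum>i\<in>I. f i) = (\<Sum>i\<in>I. poly_integral (f i))"
  by (induction I rule: infinite_finite_induct) (simp_all add: poly_integral_0 poly_integral_add)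

lemma poly_integral_pderiv: "poly_integral (pderiv q) = poly q 1 - poly q (-1)"
proof -
  have "(poly (pderiv q) has_integral poly q 1 - poly q (-1)) {-1..1}"
  proof (rule fundamental_theorem_of_calculus)
    show "(poly q has_vector_derivative poly (pderiv q) x) (at x within {-1..1})" for x
      using poly_DERIV [of q x]
      by (simp add: has_real_derivative_iff_has_vector_derivative has_vector_derivative_at_within)
  qed simp
  then show ?thesis
    unfolding poly_integral_def by (rule integral_unique)
qed

section \<open>Legendre polynomials\<close>

text \<open>Named polynomials, so that the simplifier does not rewrite products such as
  \<open>poly_id * p\<close> into \<open>pCons\<close> form.\<close>

definition poly_id :: "real poly" where
  "poly_id = [:0, 1:]"

lemma poly_poly_id [simp]: "poly poly_id x = x"
  by (simp add: poly_id_def)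

lemma pderiv_poly_id [simp]: "pderiv poly_id = 1"
  by (simp add: poly_id_def pderiv_pCons one_pCons)

definition one_minus_sq :: "real poly" where
  "one_minus_sq = [:1, 0, -1:]"

lemma poly_one_minus_sq [simp]: "poly one_minus_sq x = 1 - x\<^sup>2"
  by (simp add: one_minus_sq_def power2_eq_square)

lemma poly_legendre_Suc_Suc:
  "(real m + 2) * poly (legendre (Suc (Suc m))) x
     = (2 * real m + 3) * x * poly (legendre (Suc m)) x - (real m + 1) * poly (legendre m) x"
  by (simp add: field_simps)

lemma poly_pderiv_legendre_Suc_Suc:
  "(real m + 2) * poly (pderiv (legendre (Suc (Suc m)))) x
     = (2 * real m + 3) * (poly (legendre (Suc m)) x + x * poly (pderiv (legendre (Suc m))) x)
       - (real m + 1) * poly (pderiv (legendre m)) x"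
  by (simp add: field_simps pderiv_smult pderiv_diff pderiv_pCons)

lemma poly_legendre_sign:
  assumes "s\<^sup>2 = 1"
  shows "poly (legendre n) s = s ^ n"
proof (induction n rule: legendre.induct)
  case (3 m)
  have s2: "s * s ^ Suc m = s ^ m"
    using assms by (simp add: power2_eq_square mult.assoc [symmetric])
  have "(real m + 2) * poly (legendre (Suc (Suc m))) s
      = (2 * real m + 3) * (s * s ^ Suc m) - (real m + 1) * s ^ m"
    unfolding poly_legendre_Suc_Suc 3 by (simp add: mult.assoc)
  also have "\<dots> = (real m + 2) * s ^ m"
    unfolding s2 by (simp add: algebra_simps)
  also have "\<dots> = (real m + 2) * s ^ Suc (Suc m)"
    by (simp only: power_Suc [of s "Suc m"] s2)
  finally show ?case
    by (simp del: legendre.simps)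
qed simp_all

lemma legendre_pderiv_identities:
  "x * poly (pderiv (legendre (Suc k))) x - poly (pderiv (legendre k)) x
     = (real k + 1) * poly (legendre (Suc k)) x \<and>
   (1 - x\<^sup>2) * poly (pderiv (legendre (Suc k))) x
     = (real k + 1) * (poly (legendre k) x - x * poly (legendre (Suc k)) x)"
proof (induction k)
  case 0
  show ?case
    by (simp add: power2_eq_square pderiv_pCons)
next
  case (Suc k)
  define a b c where "a = poly (legendre k) x" and "b = poly (legendre (Suc k)) x"
    and "c = poly (legendre (Suc (Suc k))) x"
  define d0 d1 d2 where "d0 = poly (pderiv (legendre k)) x"
    and "d1 = poly (pderiv (legendre (Suc k))) x" and "d2 = poly (pderiv (legendre (Suc (Suc k)))) x"
  have IH1: "x * d1 - d0 = (real k + 1) * b" and IH2: "(1 - x\<^sup>2) * d1 = (real k + 1) * (a - x * b)"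
    using Suc unfolding a_def b_def d0_def d1_def by auto
  have rec: "(real k + 2) * c = (2 * real k + 3) * x * b - (real k + 1) * a"
    unfolding a_def b_def c_def by (rule poly_legendre_Suc_Suc)
  have "(real k + 2) * d2 = (2 * real k + 3) * (b + x * d1) - (real k + 1) * d0"
    unfolding b_def d2_def d1_def d0_def by (rule poly_pderiv_legendre_Suc_Suc)
  also have "\<dots> = (real k + 2) * ((real k + 2) * b + x * d1)"
    using IH1 by algebra
  finally have d2: "d2 = (real k + 2) * b + x * d1"
    by simp
  have "(real k + 2) * (x * d2 - d1) = (real k + 2) * ((real k + 2) * c)"
    using d2 IH2 rec by algebra
  moreover have "(real k + 2) * ((1 - x\<^sup>2) * d2) = (real k + 2) * ((real k + 2) * (b - x * c))"
    using d2 IH2 rec by algebra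
  ultimately show ?case
    unfolding a_def b_def c_def d0_def d1_def d2_def by (simp add: add_ac)
qed

declare legendre.simps [simp del]

lemma legendre_rec:
  "smult (real n + 1) (legendre (Suc n))
     = smult (2 * real n + 1) (poly_id * legendre n) - smult (real n) (legendre (n - 1))"
proof (cases n)
  case (Suc m)
  show ?thesis
    by (rule poly_ext) (use poly_legendre_Suc_Suc [of m] in \<open>simp add: Suc algebra_simps\<close>)
qed (simp add: legendre.simps poly_id_def)

lemma legendre_ode:
  "pderiv (one_minus_sq * pderiv (legendre n)) = smult (- (real n * (real n + 1))) (legendre n)"
proof (cases n)
  case (Suc k)
  have "one_minus_sq * pderiv (legendre (Suc k))
      = smult (real k + 1) (legendre k - poly_id * legendre (Suc k))"
    by (rule poly_ext)
       (use legendre_pderiv_identities [of _ k] in \<open>auto simp: algebra_simps power2_eq_square\<close>)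
  then show ?thesis
    by (intro poly_ext)
       (use legendre_pderiv_identities [of _ k]
         in \<open>auto simp: Suc pderiv_smult pderiv_diff pderiv_mult algebra_simps\<close>)
qed (simp add: legendre.simps)

lemma legendre_eigenvalue_integral:
  "real n * (real n + 1) * poly_integral (legendre m * legendre n)
     = poly_integral (one_minus_sq * pderiv (legendre m) * pderiv (legendre n))"
proof -
  define T where "T = legendre m * (one_minus_sq * pderiv (legendre n))"
  have "poly_integral (pderiv T) = 0"
    unfolding poly_integral_pderiv T_def by simp
  moreover have "pderiv T = pderiv (legendre m) * (one_minus_sq * pderiv (legendre n))
      - smult (real n * (real n + 1)) (legendre m * legendre n)"
    unfolding T_def pderiv_mult [of "legendre m"] legendre_ode by (simp add: ac_simps)
  ultimately show ?thesis
    by (simp add: poly_integral_diff poly_integral_smult ac_simps)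
qed

lemma legendre_orthogonal:
  assumes "m \<noteq> n"
  shows "poly_integral (legendre m * legendre n) = 0"
proof -
  have "real n * (real n + 1) * poly_integral (legendre m * legendre n)
      = real m * (real m + 1) * poly_integral (legendre m * legendre n)"
    using legendre_eigenvalue_integral [of n m] legendre_eigenvalue_integral [of m n]
    by (simp add: ac_simps)
  moreover have "real n * (real n + 1) \<noteq> real m * (real m + 1)"
  proof -
    have mono: "strict_mono (\<lambda>k::nat. k * (k + 1))"
      by (rule strict_monoI) (simp add: add_strict_mono mult_strict_mono)
    then have "n * (n + 1) \<noteq> m * (m + 1)"
      using strict_mono_eq [OF mono, of n m] assms by simp
    then show ?thesis
      by (metis of_nat_1 of_nat_add of_nat_eq_iff of_nat_mult)
  qed
  ultimately show ?thesis
    by simp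
qed

lemma poly_integral_one: "poly_integral 1 = 2"
  using poly_integral_pderiv [of poly_id] by simp

lemma legendre_norm_step:
  "(2 * real n + 3) * poly_integral (legendre (Suc n) * legendre (Suc n))
     = (2 * real n + 1) * poly_integral (legendre n * legendre n)"
proof -
  define J where "J = poly_integral (poly_id * legendre n * legendre (Suc n))"
  have "(real n + 1) * poly_integral (legendre (Suc n) * legendre (Suc n))
      = poly_integral (legendre (Suc n) * smult (real n + 1) (legendre (Suc n)))"
    by (simp add: poly_integral_smult)
  also have "\<dots> = (2 * real n + 1) * J - real n * poly_integral (legendre (Suc n) * legendre (n - 1))"
    unfolding legendre_rec J_def
    by (simp add: right_diff_distrib poly_integral_diff poly_integral_smult ac_simps)
  also have "\<dots> = (2 * real n + 1) * J"
    using legendre_orthogonal [of "Suc n" "n - 1"] by (simp del: One_nat_def)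
  finally have J1: "(real n + 1) * poly_integral (legendre (Suc n) * legendre (Suc n))
      = (2 * real n + 1) * J" .
  have "0 = poly_integral (smult (real (Suc n) + 1) (legendre (Suc (Suc n))) * legendre n)"
    using legendre_orthogonal [of "Suc (Suc n)" n] by (simp add: poly_integral_smult)
  also have "\<dots> = (2 * real n + 3) * J - (real n + 1) * poly_integral (legendre n * legendre n)"
    unfolding legendre_rec J_def
    by (simp add: left_diff_distrib right_diff_distrib poly_integral_diff poly_integral_smult ac_simps)
  finally have J2: "(2 * real n + 3) * J = (real n + 1) * poly_integral (legendre n * legendre n)"
    by simp
  have "(real n + 1) * ((2 * real n + 3) * poly_integral (legendre (Suc n) * legendre (Suc n)))
      = (real n + 1) * ((2 * real n + 1) * poly_integral (legendre n * legendre n))"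
    using J1 J2 by algebra
  then show ?thesis
    by simp
qed

lemma legendre_norm: "poly_integral (legendre n * legendre n) = 2 / (2 * real n + 1)"
proof (induction n)
  case 0
  show ?case
    by (simp add: legendre.simps poly_integral_one)
next
  case (Suc n)
  have "(2 * real n + 3) * poly_integral (legendre (Suc n) * legendre (Suc n))
      = (2 * real n + 1) * (2 / (2 * real n + 1))"
    unfolding legendre_norm_step Suc ..
  also have "\<dots> = 2"
    by (simp add: field_simps)
  finally show ?case
    by (simp add: field_simps)
qed

lemma poly_integral_legendre_mult:
  "poly_integral (legendre m * legendre n) = (if m = n then 2 / (2 * real n + 1) else 0)"
  using legendre_norm legendre_orthogonal by simp

lemma poly_integral_legendre_expansion_sq:
  assumes "finite K"
  shows "poly_integral ((\<Sum>k\<in>K. smult (a k) (legendre k)) * (\<Sum>k\<in>K. smult (a k) (legendre k)))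
           = (\<Sum>k\<in>K. (a k)\<^sup>2 * (2 / (2 * real k + 1)))"
proof -
  have "(\<Sum>k\<in>K. smult (a k) (legendre k)) * (\<Sum>k\<in>K. smult (a k) (legendre k))
      = (\<Sum>k\<in>K. \<Sum>l\<in>K. smult (a k * a l) (legendre k * legendre l))"
    unfolding sum_product by (simp add: mult_smult_left mult_smult_right smult_smult mult.commute)
  then have "poly_integral ((\<Sum>k\<in>K. smult (a k) (legendre k)) * (\<Sum>k\<in>K. smult (a k) (legendre k)))
      = (\<Sum>k\<in>K. \<Sum>l\<in>K. a k * a l * (if k = l then 2 / (2 * real l + 1) else 0))"
    by (simp add: poly_integral_sum poly_integral_smult poly_integral_legendre_mult)
  also have "\<dots> = (\<Sum>k\<in>K. (a k)\<^sup>2 * (2 / (2 * real k + 1)))"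
    using assms by (simp add: power2_eq_square if_distrib cong: if_cong)
  finally show ?thesis .
qed

lemma sum_smult_consecutive:
  fixes d :: "nat \<Rightarrow> 'a::comm_semiring_1"
  assumes "d 0 = 0" and "d (Suc n) = 0"
  shows "(\<Sum>m = 1..n. smult (d m) (F m + F (m - 1))) = (\<Sum>k\<le>n. smult (d k + d (Suc k)) (F k))"
proof -
  have shift: "(\<Sum>m = 1..n'. smult (d m) (F m + F (m - 1))) + smult (d 0) (F 0)
      = (\<Sum>k\<le>n'. smult (d k) (F k)) + (\<Sum>k<n'. smult (d (Suc k)) (F k))" for n'
  proof (induction n')
    case (Suc n')
    have "(\<Sum>m = 1..Suc n'. smult (d m) (F m + F (m - 1))) + smult (d 0) (F 0)
        = ((\<Sum>m = 1..n'. smult (d m) (F m + F (m - 1))) + smult (d 0) (F 0))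
          + smult (d (Suc n')) (F (Suc n') + F n')"
      by (simp add: sum.cl_ivl_Suc ac_simps)
    then show ?case
      unfolding Suc by (simp add: smult_add_right ac_simps)
  qed simp
  have "(\<Sum>k<n. smult (d (Suc k)) (F k)) = (\<Sum>k\<le>n. smult (d (Suc k)) (F k))"
    using assms(2) by (simp add: lessThan_Suc_atMost [symmetric])
  then show ?thesis
    using shift [of n] assms(1) by (simp add: sum.distrib smult_add_left)
qed

section \<open>The quadratic estimate\<close>

lemma sum_lessThan_odd: "(\<Sum>k<n. 2 * real k + 1) = (real n)\<^sup>2"
  by (induction n) (simp_all add: power2_eq_square algebra_simps)

lemma sum_lessThan_alternating_odd: "(\<Sum>k<n. (-1) ^ (n + k + 1) * (2 * real k + 1)) = real n"
proof (induction n)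
  case (Suc n)
  have "(-1::real) ^ (Suc n + n + 1) = 1"
    by (simp flip: mult_2)
  then have "(\<Sum>k<Suc n. (-1) ^ (Suc n + k + 1) * (2 * real k + 1))
      = - (\<Sum>k<n. (-1) ^ (n + k + 1) * (2 * real k + 1)) + (2 * real n + 1)"
    by (simp add: sum_negf)
  with Suc show ?case
    by simp
qed simp

lemma weighted_am_gm:
  fixes r a w h :: real
  assumes "0 < h"
  shows "2 * r * a * w - w\<^sup>2 * h \<le> r\<^sup>2 * a\<^sup>2 / h"
proof -
  have "0 \<le> (r * a - w * h)\<^sup>2 / h"
    using assms by simp
  also have "\<dots> = r\<^sup>2 * a\<^sup>2 / h - (2 * r * a * w - w\<^sup>2 * h)"
    using assms by (simp add: field_simps power2_eq_square)
  finally show ?thesis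
    by simp
qed

lemma sum_sq_div_lower_bound:
  fixes a w h :: "'i \<Rightarrow> real"
  assumes "\<And>k. k \<in> K \<Longrightarrow> 0 < h k"
  shows "2 * r * (\<Sum>k\<in>K. a k * w k) - (\<Sum>k\<in>K. (w k)\<^sup>2 * h k) \<le> r\<^sup>2 * (\<Sum>k\<in>K. (a k)\<^sup>2 / h k)"
proof -
  have "2 * r * (\<Sum>k\<in>K. a k * w k) - (\<Sum>k\<in>K. (w k)\<^sup>2 * h k)
      = (\<Sum>k\<in>K. 2 * r * a k * w k - (w k)\<^sup>2 * h k)"
    by (simp add: sum_subtractf sum_distrib_left mult.assoc)
  also have "\<dots> \<le> (\<Sum>k\<in>K. r\<^sup>2 * (a k)\<^sup>2 / h k)"
    by (intro sum_mono weighted_am_gm assms)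
  also have "\<dots> = r\<^sup>2 * (\<Sum>k\<in>K. (a k)\<^sup>2 / h k)"
    by (simp add: sum_distrib_left)
  finally show ?thesis .
qed

lemma sum_sq_div_odd_lower_bound:
  fixes a :: "nat \<Rightarrow> real"
  assumes "2 \<le> p"
  defines "Y \<equiv> \<Sum>k<p. a k" and "V \<equiv> \<Sum>k<p. (-1) ^ (p + k + 1) * a k"
  shows "real p * Y\<^sup>2 - 2 * Y * V + real p * V\<^sup>2
           \<le> real p * ((real p)\<^sup>2 - 1) * (\<Sum>k<p. (a k)\<^sup>2 / (2 * real k + 1))"
proof -
  define P where "P = real p"
  define q where "q = P * (P\<^sup>2 - 1)"
  define e where "e k = (-1::real) ^ (p + k + 1)" for k
  \<comment> \<open>The Gram matrix of \<open>1\<close> and \<open>e\<close> in the weights \<open>2k+1\<close> is \<open>[[P\<^sup>2, P], [P, P\<^sup>2]]\<close>;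
    \<open>(s + t e k) / q\<close> is the extremal weight vector of the Cauchy-Schwarz bound.\<close>
  define s t where "s = P * Y - V" and "t = P * V - Y"
  have "1 < P"
    using assms(1) by (simp add: P_def)
  then have q_pos: "0 < q"
    unfolding q_def by (simp add: one_less_power)
  have e_sq: "(e k)\<^sup>2 = 1" for k
    by (simp add: e_def flip: power_mult)
  have "(\<Sum>k<p. a k * (s + t * e k)) = s * Y + t * V"
    unfolding Y_def V_def e_def [symmetric] by (simp add: distrib_left sum.distrib sum_distrib_left ac_simps)
  moreover have "(\<Sum>k<p. (s + t * e k)\<^sup>2 * (2 * real k + 1)) = s\<^sup>2 * P\<^sup>2 + 2 * s * t * P + t\<^sup>2 * P\<^sup>2"
  proof -
    have "(s + t * e k)\<^sup>2 * (2 * real k + 1)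
        = s\<^sup>2 * (2 * real k + 1) + 2 * s * t * (e k * (2 * real k + 1)) + t\<^sup>2 * (2 * real k + 1)" for k
      using e_sq [of k] by (simp add: power2_eq_square algebra_simps)
    then have "(\<Sum>k<p. (s + t * e k)\<^sup>2 * (2 * real k + 1))
        = s\<^sup>2 * (\<Sum>k<p. 2 * real k + 1) + 2 * s * t * (\<Sum>k<p. e k * (2 * real k + 1))
          + t\<^sup>2 * (\<Sum>k<p. 2 * real k + 1)"
      by (simp add: sum.distrib flip: sum_distrib_left)
    then show ?thesis
      unfolding e_def sum_lessThan_odd sum_lessThan_alternating_odd P_def .
  qed
  ultimately have "2 * q * (s * Y + t * V) - (s\<^sup>2 * P\<^sup>2 + 2 * s * t * P + t\<^sup>2 * P\<^sup>2)
      \<le> q\<^sup>2 * (\<Sum>k<p. (a k)\<^sup>2 / (2 * real k + 1))"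
    using sum_sq_div_lower_bound [of "{..<p}" "\<lambda>k. 2 * real k + 1" q a "\<lambda>k. s + t * e k"] by simp
  moreover have "2 * q * (s * Y + t * V) - (s\<^sup>2 * P\<^sup>2 + 2 * s * t * P + t\<^sup>2 * P\<^sup>2)
      = q * (P * Y\<^sup>2 - 2 * Y * V + P * V\<^sup>2)"
    unfolding q_def s_def t_def by algebra
  ultimately have "q * (P * Y\<^sup>2 - 2 * Y * V + P * V\<^sup>2) \<le> q * (q * (\<Sum>k<p. (a k)\<^sup>2 / (2 * real k + 1)))"
    by (simp add: power2_eq_square mult.assoc)
  then show ?thesis
    using q_pos unfolding q_def P_def by (simp only: mult_le_cancel_left_pos)
qed

lemma quadratic_form_neg:
  fixes A B C Y V :: real
  assumes "A < 0" and "B\<^sup>2 < 4 * A * C" and "Y \<noteq> 0 \<or> V \<noteq> 0"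
  shows "A * Y\<^sup>2 + B * Y * V + C * V\<^sup>2 < 0"
proof -
  have "0 < (2 * A * Y + B * V)\<^sup>2 + (4 * A * C - B\<^sup>2) * V\<^sup>2"
  proof (cases "V = 0")
    case True
    with assms show ?thesis
      by simp
  next
    case False
    with assms(2) have "0 < (4 * A * C - B\<^sup>2) * V\<^sup>2"
      by simp
    then show ?thesis
      by (simp add: add_nonneg_pos)
  qed
  also have "\<dots> = 4 * A * (A * Y\<^sup>2 + B * Y * V + C * V\<^sup>2)"
    by (simp add: power2_eq_square algebra_simps)
  finally show ?thesis
    using assms(1) by (simp add: zero_less_mult_iff)
qed

text \<open>The discriminant of the form \<open>A Y\<^sup>2 + B Y V + C V\<^sup>2\<close> below factors as
  \<open>16 P (2P + 1) (P + 1)\<^sup>2 (P - 1) (P\<^sup>2 - 13P - 8)\<close>; this is where the bound \<open>p \<le> 13\<close> comes from.\<close>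

lemma delta_neg_of_gram_bound:
  fixes P S Y V :: real
  assumes "1 < P" and "P\<^sup>2 < 13 * P + 8" and "Y \<noteq> 0 \<or> V \<noteq> 0"
    and gram: "P * Y\<^sup>2 - 2 * Y * V + P * V\<^sup>2 \<le> P * (P\<^sup>2 - 1) * S"
  shows "(2 * Y - V)\<^sup>2 - 8 * P\<^sup>2 * S + P\<^sup>2 * V\<^sup>2 / (2 * P + 1) < 0"
proof -
  define A B C where "A = - (4 * ((2 * P + 1) * (P\<^sup>2 + 1)))"
    and "B = 4 * (2 * P + 1) * (1 + 4 * P - P\<^sup>2)"
    and "C = P ^ 4 - 14 * P ^ 3 - 8 * P\<^sup>2 - 2 * P - 1"
  define w where "w = P\<^sup>2 * V\<^sup>2 / (2 * P + 1)"
  have P_sq: "0 < P\<^sup>2 - 1"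
    using assms(1) by (simp add: one_less_power)
  have "0 < (2 * P + 1) * (P\<^sup>2 + 1)"
    using assms(1) by (intro mult_pos_pos) (simp_all add: add_pos_nonneg)
  then have A_neg: "A < 0"
    unfolding A_def by simp
  have "B\<^sup>2 - 4 * A * C = 16 * P * (2 * P + 1) * (P + 1)\<^sup>2 * (P - 1) * (P\<^sup>2 - 13 * P - 8)"
    unfolding A_def B_def C_def by algebra
  also have "\<dots> < 0"
    using assms(1,2) by (intro mult_pos_neg mult_pos_pos) auto
  finally have "B\<^sup>2 < 4 * A * C"
    by simp
  with A_neg have form_neg: "A * Y\<^sup>2 + B * Y * V + C * V\<^sup>2 < 0"
    using assms(3) by (rule quadratic_form_neg)
  have "(2 * P + 1) * w = P\<^sup>2 * V\<^sup>2"
    using assms(1) by (simp add: w_def)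
  then have "(2 * P + 1) * (P\<^sup>2 - 1) * ((2 * Y - V)\<^sup>2 - 8 * P\<^sup>2 * S + w)
      = (2 * P + 1) * (P\<^sup>2 - 1) * (2 * Y - V)\<^sup>2 - 8 * P * (2 * P + 1) * (P * (P\<^sup>2 - 1) * S)
        + (P\<^sup>2 - 1) * (P\<^sup>2 * V\<^sup>2)"
    by algebra
  also have "\<dots> \<le> (2 * P + 1) * (P\<^sup>2 - 1) * (2 * Y - V)\<^sup>2
        - 8 * P * (2 * P + 1) * (P * Y\<^sup>2 - 2 * Y * V + P * V\<^sup>2) + (P\<^sup>2 - 1) * (P\<^sup>2 * V\<^sup>2)"
    using gram assms(1) by (simp add: mult_left_mono)
  also have "\<dots> = A * Y\<^sup>2 + B * Y * V + C * V\<^sup>2"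
    unfolding A_def B_def C_def by algebra
  finally have "(2 * P + 1) * (P\<^sup>2 - 1) * ((2 * Y - V)\<^sup>2 - 8 * P\<^sup>2 * S + w) < 0"
    using form_neg by linarith
  then show ?thesis
    using assms(1) P_sq by (simp add: w_def mult_less_0_iff)
qed

lemma alternating_sum_zero_last:
  fixes a :: "nat \<Rightarrow> real"
  assumes "(\<Sum>k\<le>p. a k * (-1) ^ k) = 0"
  shows "a p = (\<Sum>k<p. (-1) ^ (p + k + 1) * a k)"
proof -
  have sign: "(-1::real) ^ p * (-1) ^ (p + k + 1) = - ((-1) ^ k)" for k
    by (simp add: minus_one_power_iff)
  have "(-1) ^ p * (\<Sum>k<p. (-1) ^ (p + k + 1) * a k) = - (\<Sum>k<p. a k * (-1) ^ k)"
    unfolding sum_distrib_left mult.assoc [symmetric] sign by (simp add: sum_negf mult.commute)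
  then have "(-1) ^ p * (a p - (\<Sum>k<p. (-1) ^ (p + k + 1) * a k)) = (\<Sum>k\<le>p. a k * (-1) ^ k)"
    by (simp add: lessThan_Suc_atMost [symmetric] algebra_simps)
  with assms show ?thesis
    by simp
qed

lemma delta_split_last_coefficient:
  fixes a :: "nat \<Rightarrow> real"
  shows "(2 * (\<Sum>k\<le>p. a k) - 3 * a p)\<^sup>2
           + (real p)\<^sup>2 * (- 4 * (\<Sum>k\<le>p. (a k)\<^sup>2 * (2 / (2 * real k + 1))) + 9 * (a p)\<^sup>2 / (2 * real p + 1))
         = (2 * (\<Sum>k<p. a k) - a p)\<^sup>2 - 8 * (real p)\<^sup>2 * (\<Sum>k<p. (a k)\<^sup>2 / (2 * real k + 1))
           + (real p)\<^sup>2 * (a p)\<^sup>2 / (2 * real p + 1)"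
proof -
  define w where "w = (a p)\<^sup>2 / (2 * real p + 1)"
  have "(\<Sum>k\<le>p. (a k)\<^sup>2 * (2 / (2 * real k + 1))) = 2 * (\<Sum>k<p. (a k)\<^sup>2 / (2 * real k + 1)) + 2 * w"
    by (simp add: w_def lessThan_Suc_atMost [symmetric] sum_distrib_left mult.commute)
  moreover have "9 * (a p)\<^sup>2 / (2 * real p + 1) = 9 * w" and "(real p)\<^sup>2 * (a p)\<^sup>2 / (2 * real p + 1) = (real p)\<^sup>2 * w"
    by (simp_all add: w_def)
  ultimately show ?thesis
    by (simp add: lessThan_Suc_atMost [symmetric] power2_eq_square algebra_simps)
qed

lemma legendre_coefficients_delta_neg:
  fixes a :: "nat \<Rightarrow> real"
  assumes "1 \<le> p" and "p \<le> 13"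
    and alternating: "(\<Sum>k\<le>p. a k * (-1) ^ k) = 0" and nonzero: "\<exists>k\<le>p. a k \<noteq> 0"
  shows "(2 * (\<Sum>k\<le>p. a k) - 3 * a p)\<^sup>2
           + (real p)\<^sup>2 * (- 4 * (\<Sum>k\<le>p. (a k)\<^sup>2 * (2 / (2 * real k + 1))) + 9 * (a p)\<^sup>2 / (2 * real p + 1)) < 0"
proof -
  define S where "S = (\<Sum>k<p. (a k)\<^sup>2 / (2 * real k + 1))"
  define Y where "Y = (\<Sum>k<p. a k)"
  define V where "V = (\<Sum>k<p. (-1) ^ (p + k + 1) * a k)"
  have a_p: "a p = V"
    unfolding V_def using alternating by (rule alternating_sum_zero_last)
  have "\<exists>k<p. a k \<noteq> 0"
  proof (rule ccontr)
    assume "\<not> (\<exists>k<p. a k \<noteq> 0)"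
    with a_p nonzero show False
      by (auto simp: V_def le_less)
  qed
  then have S_pos: "0 < S"
    unfolding S_def by (auto intro: sum_pos2)
  have "(2 * (\<Sum>k\<le>p. a k) - 3 * a p)\<^sup>2
           + (real p)\<^sup>2 * (- 4 * (\<Sum>k\<le>p. (a k)\<^sup>2 * (2 / (2 * real k + 1))) + 9 * (a p)\<^sup>2 / (2 * real p + 1))
      = (2 * Y - V)\<^sup>2 - 8 * (real p)\<^sup>2 * S + (real p)\<^sup>2 * V\<^sup>2 / (2 * real p + 1)"
    unfolding delta_split_last_coefficient by (simp add: a_p Y_def S_def)
  also have "\<dots> < 0"
  proof (cases "p = 1")
    case True
    then have "Y = a 0" "V = a 0" "S = (a 0)\<^sup>2"
      by (simp_all add: Y_def V_def S_def)
    with True S_pos show ?thesis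
      by simp
  next
    case False
    have "p * p < 13 * p + 8"
      using mult_le_mono1 [OF assms(2), of p] by linarith
    then have "real (p * p) < real (13 * p + 8)"
      by (simp only: of_nat_less_iff)
    with False assms(1) have P_bounds: "1 < real p" "(real p)\<^sup>2 < 13 * real p + 8"
      by (simp_all add: power2_eq_square)
    show ?thesis
    proof (cases "Y = 0 \<and> V = 0")
      case True
      with S_pos P_bounds show ?thesis
        by simp
    next
      case False
      have "real p * Y\<^sup>2 - 2 * Y * V + real p * V\<^sup>2 \<le> real p * ((real p)\<^sup>2 - 1) * S"
        using sum_sq_div_odd_lower_bound [of p a] False assms(1) \<open>p \<noteq> 1\<close>
        unfolding Y_def V_def S_def by simp
      with P_bounds False show ?thesis
        by (intro delta_neg_of_gram_bound) auto
    qed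
  qed
  finally show ?thesis .
qed

theorem lemma10:
  fixes p :: nat and \<eta> :: "real poly" and c :: "nat \<Rightarrow> real"
  assumes "1 \<le> p" and "p \<le> 13"
    and "degree \<eta> \<le> p" and "poly \<eta> (-1) = 0"
    and "\<eta> = (\<Sum>m = 1..p. smult (c m) (legendre m + legendre (m - 1)))"
    and "\<eta> \<noteq> 0"
  shows "(2 * poly \<eta> 1 - 3 * c p)\<^sup>2
           + (real p)\<^sup>2 * (- 4 * integral {-1..1} (\<lambda>x. (poly \<eta> x)\<^sup>2)
                             + 9 * (c p)\<^sup>2 / (2 * real p + 1)) < 0"
proof -
  define c' where "c' k = (if 1 \<le> k \<and> k \<le> p then c k else 0)" for k
  define a where "a k = c' k + c' (Suc k)" for k
  have "\<eta> = (\<Sum>m = 1..p. smult (c' m) (legendre m + legendre (m - 1)))"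
    unfolding assms(5) by (rule sum.cong) (auto simp: c'_def)
  also have "\<dots> = (\<Sum>k\<le>p. smult (a k) (legendre k))"
    unfolding a_def by (rule sum_smult_consecutive) (simp_all add: c'_def)
  finally have \<eta>_expansion: "\<eta> = (\<Sum>k\<le>p. smult (a k) (legendre k))" .
  then have poly_\<eta>: "poly \<eta> x = (\<Sum>k\<le>p. a k * poly (legendre k) x)" for x
    by (simp add: poly_sum)
  have "(\<lambda>x. (poly \<eta> x)\<^sup>2) = poly (\<eta> * \<eta>)"
    by (auto simp: power2_eq_square)
  then have "integral {-1..1} (\<lambda>x. (poly \<eta> x)\<^sup>2) = (\<Sum>k\<le>p. (a k)\<^sup>2 * (2 / (2 * real k + 1)))"
    using poly_integral_legendre_expansion_sq [of "{..p}" a]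
    by (simp add: poly_integral_def \<eta>_expansion)
  moreover have "poly \<eta> 1 = (\<Sum>k\<le>p. a k)"
    by (simp add: poly_\<eta> poly_legendre_sign)
  moreover have "c p = a p"
    using assms(1) by (simp add: a_def c'_def)
  moreover have "(\<Sum>k\<le>p. a k * (-1) ^ k) = 0"
    using assms(4) by (simp add: poly_\<eta> poly_legendre_sign)
  moreover have "\<exists>k\<le>p. a k \<noteq> 0"
  proof (rule ccontr)
    assume "\<not> (\<exists>k\<le>p. a k \<noteq> 0)"
    with \<eta>_expansion assms(6) show False
      by simp
  qed
  ultimately show ?thesis
    using legendre_coefficients_delta_neg [OF assms(1,2)] by simp
qed

end
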